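(* Let $(M,g)$ be a space-time satisfying Einstein's field equation $R_{ij}-\frac12 R g_{ij}+\Lambda g_{ij}=kT_{ij}$, and suppose its $\mathcal{W}^{\star}$-curvature tensor is covariantly constant, $\nabla_m\mathcal{W}^{\star}_{ijkl}=0$. Then $M$ is conformally semi-symmetric and the energy-momentum tensor $T_{ij}$ is semi-symmetric.
   Context: A space-time is a $4$-dimensional Lorentzian manifold $(M,g)$ with Levi-Civita connection $\nabla$. $R_{ijkl}$ denotes the components of the Riemann curvature tensor, with index conventions such that the Ricci tensor is $R_{jk}=g^{il}R_{ijkl}$; $R=g^{jk}R_{jk}$ is the scalar curvature. The $\mathcal{W}^{\star}$-curvature tensor is $\mathcal{W}^{\star}_{ijkl}=R_{ijkl}-\tfrac{1}{3}\left[g_{jk}R_{il}-g_{jl}R_{ik}\right]$. $\Lambda$ is a constant, $k\neq0$ a constant, $T_{ij}$ a symmetric $(0,2)$-tensor. A tensor $A$ is semi-symmetric if $(\nabla_\mu\nabla_\nu-\nabla_\nu\nabla_\mu)A=0$ for all indices; $M$ is conformally semi-symmetric if its Weyl conformal curvature tensor $\mathcal{C}_{ijkl}$ is semi-symmetric. *)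

theory Defs
  imports "HOL-Analysis.Analysis"
begin

text \<open>A space-time is represented on a coordinate chart: an open set U of real^4 with a
smooth metric g (components g_ij as functions of the coordinates).\<close>

type_synonym point = "real^4"
type_synonym metric = "point \<Rightarrow> 4 \<Rightarrow> 4 \<Rightarrow> real"
type_synonym ctensor = "point \<Rightarrow> 4 list \<Rightarrow> real"  \<comment> \<open>covariant tensor field, indices as a list\<close>

definition pd :: "(point \<Rightarrow> real) \<Rightarrow> 4 \<Rightarrow> point \<Rightarrow> real" where
  "pd f i x = frechet_derivative f (at x) (axis i 1)"

fun Ck_on :: "nat \<Rightarrow> point set \<Rightarrow> (point \<Rightarrow> real) \<Rightarrow> bool" where
  "Ck_on 0 U f = continuous_on U f"
| "Ck_on (Suc k) U f = ((\<forall>x\<in>U. f differentiable (at x)) \<and> (\<forall>i. Ck_on k U (pd f i)))"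

definition smooth_fun_on :: "point set \<Rightarrow> (point \<Rightarrow> real) \<Rightarrow> bool" where
  "smooth_fun_on U f = (\<forall>k. Ck_on k U f)"

definition gmat :: "metric \<Rightarrow> point \<Rightarrow> real^4^4" where
  "gmat g x = (\<chi> i j. g x i j)"

definition lorentz_diag :: "real^4^4" where
  "lorentz_diag = (\<chi> i j. if i = j then (if i = 0 then -1 else 1) else 0)"

definition lorentzian_metric_on :: "point set \<Rightarrow> metric \<Rightarrow> bool" where
  "lorentzian_metric_on U g =
     (open U \<and> U \<noteq> {} \<and>
      (\<forall>i j. smooth_fun_on U (\<lambda>x. g x i j)) \<and>
      (\<forall>x\<in>U. \<forall>i j. g x i j = g x j i) \<and>
      (\<forall>x\<in>U. \<exists>P::real^4^4. invertible P \<and> transpose P ** gmat g x ** P = lorentz_diag))"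

definition ginv :: "metric \<Rightarrow> point \<Rightarrow> 4 \<Rightarrow> 4 \<Rightarrow> real" where
  "ginv g x i j = matrix_inv (gmat g x) $ i $ j"

definition Chr :: "metric \<Rightarrow> point \<Rightarrow> 4 \<Rightarrow> 4 \<Rightarrow> 4 \<Rightarrow> real" where
  "Chr g x k i j = (1/2) * (\<Sum>l\<in>UNIV. ginv g x k l *
      (pd (\<lambda>y. g y j l) i x + pd (\<lambda>y. g y i l) j x - pd (\<lambda>y. g y i j) l x))"

text \<open>R_ijkl = g(R(d_i,d_j) d_k, d_l), R(X,Y)=[nabla_X,nabla_Y]-nabla_[X,Y];
 then R_jk = g^il R_ijkl is the usual Ricci tensor.\<close>
definition Riem :: "metric \<Rightarrow> point \<Rightarrow> 4 \<Rightarrow> 4 \<Rightarrow> 4 \<Rightarrow> 4 \<Rightarrow> real" where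
  "Riem g x i j k l = (\<Sum>p\<in>UNIV. g x l p *
      (pd (\<lambda>y. Chr g y p j k) i x - pd (\<lambda>y. Chr g y p i k) j x
       + (\<Sum>m\<in>UNIV. Chr g x m j k * Chr g x p i m - Chr g x m i k * Chr g x p j m)))"

definition Ric :: "metric \<Rightarrow> point \<Rightarrow> 4 \<Rightarrow> 4 \<Rightarrow> real" where
  "Ric g x j k = (\<Sum>i\<in>UNIV. \<Sum>l\<in>UNIV. ginv g x i l * Riem g x i j k l)"

definition Scal :: "metric \<Rightarrow> point \<Rightarrow> real" where
  "Scal g x = (\<Sum>j\<in>UNIV. \<Sum>k\<in>UNIV. ginv g x j k * Ric g x j k)"

definition Wstar :: "metric \<Rightarrow> point \<Rightarrow> 4 \<Rightarrow> 4 \<Rightarrow> 4 \<Rightarrow> 4 \<Rightarrow> real" where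
  "Wstar g x i j k l = Riem g x i j k l - (1/3) * (g x j k * Ric g x i l - g x j l * Ric g x i k)"

definition Weyl :: "metric \<Rightarrow> point \<Rightarrow> 4 \<Rightarrow> 4 \<Rightarrow> 4 \<Rightarrow> 4 \<Rightarrow> real" where
  "Weyl g x i j k l = Riem g x i j k l
     - (1/2) * (g x j k * Ric g x i l - g x j l * Ric g x i k + g x i l * Ric g x j k - g x i k * Ric g x j l)
     + (Scal g x / 6) * (g x j k * g x i l - g x j l * g x i k)"

definition as2 :: "(point \<Rightarrow> 4 \<Rightarrow> 4 \<Rightarrow> real) \<Rightarrow> ctensor" where
  "as2 A x idx = A x (idx!0) (idx!1)"

definition as4 :: "(point \<Rightarrow> 4 \<Rightarrow> 4 \<Rightarrow> 4 \<Rightarrow> 4 \<Rightarrow> real) \<Rightarrow> ctensor" where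
  "as4 A x idx = A x (idx!0) (idx!1) (idx!2) (idx!3)"

text \<open>Levi-Civita covariant derivative of a covariant tensor field; the new
 (differentiation) index is placed first: (nabla A)(m # idx) = nabla_m A_idx.\<close>
definition cov :: "metric \<Rightarrow> ctensor \<Rightarrow> ctensor" where
  "cov g A x idx = (case idx of [] \<Rightarrow> 0
     | m # rest \<Rightarrow> pd (\<lambda>y. A y rest) m x
         - (\<Sum>a<length rest. \<Sum>p\<in>UNIV. Chr g x p m (rest ! a) * A x (rest[a := p])))"

definition semi_symmetric_on :: "point set \<Rightarrow> metric \<Rightarrow> nat \<Rightarrow> ctensor \<Rightarrow> bool" where
  "semi_symmetric_on U g r A =
     (\<forall>x\<in>U. \<forall>mu nu idx. length idx = r \<longrightarrow>
        cov g (cov g A) x (mu # nu # idx) = cov g (cov g A) x (nu # mu # idx))"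

definition covariantly_constant_on :: "point set \<Rightarrow> metric \<Rightarrow> nat \<Rightarrow> ctensor \<Rightarrow> bool" where
  "covariantly_constant_on U g r A =
     (\<forall>x\<in>U. \<forall>idx. length idx = Suc r \<longrightarrow> cov g A x idx = 0)"

end

theory Submission
  imports Defs
begin

text \<open>
  If W* is parallel, differentiating its definition gives
  \<nabla>_m R_ijkl = (g_jk \<nabla>_m R_il - g_jl \<nabla>_m R_ik) / 3.
  The antisymmetry of R_ijkl in (i, j) turns this into an identity for E = \<nabla>_m Ric whose
  contraction with g^jk gives E_il = g_il tr E / 4, and tr E = \<partial>_m R because the inverse
  metric is parallel. Substituting back, \<nabla>_m R_ijkl = (g_jk g_il - g_jl g_ik) \<partial>_m R / 12,
  and all terms of \<nabla>C cancel: the Weyl tensor is parallel, hence semi-symmetric.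
  Einstein's equation then gives \<nabla>_m T_ij = - g_ij \<partial>_m R / (4 k), so \<nabla>\<nabla>T is g times the
  Hessian of R, which is symmetric by Schwarz's theorem and the symmetry of the Christoffel
  symbols.
\<close>

section \<open>Partial derivatives and smooth functions\<close>

lemma pd_eqI: "(f has_derivative f') (at x) \<Longrightarrow> pd f i x = f' (axis i 1)"
  by (simp add: pd_def frechet_derivative_at[symmetric])

lemma pd_add:
  assumes "f differentiable (at x)" "h differentiable (at x)"
  shows "pd (\<lambda>y. f y + h y) i x = pd f i x + pd h i x"
  using pd_eqI[OF has_derivative_add[OF assms[unfolded frechet_derivative_works]]]
  by (simp add: pd_def)

lemma pd_diff:
  assumes "f differentiable (at x)" "h differentiable (at x)"
  shows "pd (\<lambda>y. f y - h y) i x = pd f i x - pd h i x"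
  using pd_eqI[OF has_derivative_diff[OF assms[unfolded frechet_derivative_works]]]
  by (simp add: pd_def)

lemma pd_mult:
  assumes "f differentiable (at x)" "h differentiable (at x)"
  shows "pd (\<lambda>y. f y * h y) i x = f x * pd h i x + pd f i x * h x"
  using pd_eqI[OF has_derivative_mult[OF assms[unfolded frechet_derivative_works]]]
  by (simp add: pd_def)

lemma pd_const: "pd (\<lambda>y. c) i x = 0"
  using pd_eqI[OF has_derivative_const] by simp

lemma pd_cmult: "f differentiable (at x) \<Longrightarrow> pd (\<lambda>y. c * f y) i x = c * pd f i x"
  using pd_mult[of "\<lambda>y. c" x f i] by (simp add: pd_const)

lemma pd_minus: "f differentiable (at x) \<Longrightarrow> pd (\<lambda>y. - f y) i x = - pd f i x"
  using pd_cmult[of f x "-1" i] by simp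

lemma pd_sum:
  assumes "finite A" "\<And>a. a \<in> A \<Longrightarrow> f a differentiable (at x)"
  shows "pd (\<lambda>y. \<Sum>a\<in>A. f a y) i x = (\<Sum>a\<in>A. pd (f a) i x)"
proof -
  have "((\<lambda>y. \<Sum>a\<in>A. f a y) has_derivative (\<lambda>v. \<Sum>a\<in>A. frechet_derivative (f a) (at x) v)) (at x)"
    using assms by (intro has_derivative_sum) (simp add: frechet_derivative_works[symmetric])
  from pd_eqI[OF this] show ?thesis by (simp add: pd_def)
qed

lemma pd_cong_open:
  assumes "open U" "x \<in> U" "\<And>y. y \<in> U \<Longrightarrow> f y = h y" "f differentiable (at x)"
  shows "pd f i x = pd h i x" "h differentiable (at x)"
proof -
  have "(h has_derivative frechet_derivative f (at x)) (at x)"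
    using assms(4)[unfolded frechet_derivative_works] assms(1-3)
    by (rule has_derivative_transform_within_open) simp
  then show "pd f i x = pd h i x" "h differentiable (at x)"
    by (auto simp: pd_eqI[symmetric] pd_def differentiable_def)
qed

lemma pd_eq_0_open: "open U \<Longrightarrow> x \<in> U \<Longrightarrow> (\<And>y. y \<in> U \<Longrightarrow> f y = 0) \<Longrightarrow> pd f i x = 0"
  using pd_cong_open(1)[of U x "\<lambda>y. 0" f i] by (simp add: pd_const)

lemma Ck_on_SucD: "Ck_on (Suc k) U f \<Longrightarrow> Ck_on k U f"
proof (induction k arbitrary: f)
  case 0
  then show ?case
    by (auto intro!: continuous_at_imp_continuous_on differentiable_imp_continuous_within)
qed simp

lemma Ck_on_cong: "open U \<Longrightarrow> Ck_on k U f \<Longrightarrow> (\<And>y. y \<in> U \<Longrightarrow> f y = h y) \<Longrightarrow> Ck_on k U h"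
proof (induction k arbitrary: f h)
  case 0
  then show ?case using continuous_on_cong[of U U f h] by simp
next
  case (Suc k)
  then have df: "\<forall>x\<in>U. f differentiable (at x)" and pdf: "\<And>i. Ck_on k U (pd f i)"
    by auto
  have "\<forall>x\<in>U. h differentiable (at x)"
    using pd_cong_open(2)[of U _ f h] Suc.prems(1,3) df by blast
  moreover have "Ck_on k U (pd h i)" for i
  proof (rule Suc.IH[OF Suc.prems(1) pdf])
    show "y \<in> U \<Longrightarrow> pd f i y = pd h i y" for y
      using pd_cong_open(1)[of U y f h] Suc.prems(1,3) df by blast
  qed
  ultimately show ?case by simp
qed

lemma Ck_on_const: "Ck_on k U (\<lambda>x. c)"
proof (induction k arbitrary: c)
  case (Suc k)
  have "pd (\<lambda>x. c) i = (\<lambda>x. 0)" for i by (simp add: pd_const fun_eq_iff)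
  with Suc show ?case by simp
qed simp

lemma Ck_on_add: "open U \<Longrightarrow> Ck_on k U f \<Longrightarrow> Ck_on k U h \<Longrightarrow> Ck_on k U (\<lambda>x. f x + h x)"
proof (induction k arbitrary: f h)
  case (Suc k)
  then have df: "\<forall>x\<in>U. f differentiable (at x)" "\<forall>x\<in>U. h differentiable (at x)"
    and pdf: "\<And>i. Ck_on k U (pd f i)" "\<And>i. Ck_on k U (pd h i)"
    by auto
  have "Ck_on k U (pd (\<lambda>x. f x + h x) i)" for i
  proof (rule Ck_on_cong[OF Suc.prems(1) Suc.IH[OF Suc.prems(1) pdf]])
    show "y \<in> U \<Longrightarrow> pd f i y + pd h i y = pd (\<lambda>x. f x + h x) i y" for y
      using df by (simp add: pd_add)
  qed
  with df show ?case by auto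
qed (auto intro: continuous_on_add)

lemma Ck_on_mult: "open U \<Longrightarrow> Ck_on k U f \<Longrightarrow> Ck_on k U h \<Longrightarrow> Ck_on k U (\<lambda>x. f x * h x)"
proof (induction k arbitrary: f h)
  case (Suc k)
  then have df: "\<forall>x\<in>U. f differentiable (at x)" "\<forall>x\<in>U. h differentiable (at x)"
    and pdf: "\<And>i. Ck_on k U (pd f i)" "\<And>i. Ck_on k U (pd h i)"
    and fh: "Ck_on k U f" "Ck_on k U h"
    by (auto intro: Ck_on_SucD)
  have "Ck_on k U (pd (\<lambda>x. f x * h x) i)" for i
  proof (rule Ck_on_cong[OF Suc.prems(1)
        Ck_on_add[OF Suc.prems(1) Suc.IH[OF Suc.prems(1) fh(1) pdf(2)] Suc.IH[OF Suc.prems(1) pdf(1) fh(2)]]])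
    show "y \<in> U \<Longrightarrow> f y * pd h i y + pd f i y * h y = pd (\<lambda>x. f x * h x) i y" for y
      using df by (simp add: pd_mult)
  qed
  with df show ?case by auto
qed (auto intro: continuous_on_mult)

lemma Ck_on_inverse:
  "open U \<Longrightarrow> Ck_on k U f \<Longrightarrow> (\<And>x. x \<in> U \<Longrightarrow> f x \<noteq> 0) \<Longrightarrow> Ck_on k U (\<lambda>x. 1 / f x)"
proof (induction k arbitrary: f)
  case (Suc k)
  have "pd (\<lambda>x. 1 / f x) i x = (-1) * pd f i x * ((1 / f x) * (1 / f x))" if "x \<in> U" for i x
  proof -
    have "((\<lambda>x. inverse (f x)) has_derivative
        (\<lambda>v. - (inverse (f x) * frechet_derivative f (at x) v * inverse (f x)))) (at x)"
      using Suc.prems that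
      by (intro Deriv.has_derivative_inverse) (auto simp: frechet_derivative_works[symmetric])
    from pd_eqI[OF this[unfolded inverse_eq_divide]] show ?thesis by (simp add: pd_def)
  qed
  moreover have "Ck_on k U (\<lambda>x. (-1) * pd f i x * ((1 / f x) * (1 / f x)))" for i
  proof -
    have "Ck_on k U (\<lambda>x. 1 / f x)"
      using Suc.IH[OF Suc.prems(1) Ck_on_SucD[OF Suc.prems(2)] Suc.prems(3)] .
    then show ?thesis
      using Suc.prems(2) by (intro Ck_on_mult[OF Suc.prems(1)] Ck_on_const) simp_all
  qed
  ultimately have "Ck_on k U (pd (\<lambda>x. 1 / f x) i)" for i
    using Ck_on_cong[OF Suc.prems(1)] by (metis (no_types, lifting))
  then show ?case using Suc.prems by (auto intro!: differentiable_divide)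
qed (auto intro!: continuous_on_divide)

lemma smooth_fun_on_const: "smooth_fun_on U (\<lambda>x. c)"
  by (simp add: smooth_fun_on_def Ck_on_const)

lemma smooth_fun_on_add:
  "open U \<Longrightarrow> smooth_fun_on U f \<Longrightarrow> smooth_fun_on U h \<Longrightarrow> smooth_fun_on U (\<lambda>x. f x + h x)"
  by (simp add: smooth_fun_on_def Ck_on_add)

lemma smooth_fun_on_mult:
  "open U \<Longrightarrow> smooth_fun_on U f \<Longrightarrow> smooth_fun_on U h \<Longrightarrow> smooth_fun_on U (\<lambda>x. f x * h x)"
  by (simp add: smooth_fun_on_def Ck_on_mult)

lemma smooth_fun_on_minus: "open U \<Longrightarrow> smooth_fun_on U f \<Longrightarrow> smooth_fun_on U (\<lambda>x. - f x)"
  using smooth_fun_on_mult[of U "\<lambda>x. -1" f] by (simp add: smooth_fun_on_const)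

lemma smooth_fun_on_diff:
  "open U \<Longrightarrow> smooth_fun_on U f \<Longrightarrow> smooth_fun_on U h \<Longrightarrow> smooth_fun_on U (\<lambda>x. f x - h x)"
  using smooth_fun_on_add[of U f "\<lambda>x. - h x"] smooth_fun_on_minus by simp

lemma smooth_fun_on_inverse:
  "open U \<Longrightarrow> smooth_fun_on U f \<Longrightarrow> (\<And>x. x \<in> U \<Longrightarrow> f x \<noteq> 0) \<Longrightarrow> smooth_fun_on U (\<lambda>x. 1 / f x)"
  by (simp add: smooth_fun_on_def Ck_on_inverse)

lemma smooth_fun_on_cong:
  "open U \<Longrightarrow> smooth_fun_on U f \<Longrightarrow> (\<And>y. y \<in> U \<Longrightarrow> f y = h y) \<Longrightarrow> smooth_fun_on U h"
  unfolding smooth_fun_on_def using Ck_on_cong by blast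

lemma smooth_fun_on_pd: "smooth_fun_on U f \<Longrightarrow> smooth_fun_on U (pd f i)"
  unfolding smooth_fun_on_def by (metis Ck_on.simps(2))

lemma smooth_fun_on_differentiable: "smooth_fun_on U f \<Longrightarrow> x \<in> U \<Longrightarrow> f differentiable (at x)"
  unfolding smooth_fun_on_def by (metis Ck_on.simps(2))

lemma smooth_fun_on_continuous: "smooth_fun_on U f \<Longrightarrow> continuous_on U f"
  unfolding smooth_fun_on_def by (metis Ck_on.simps(1))

lemma smooth_fun_on_sum:
  assumes "open U" "finite A" "\<And>a. a \<in> A \<Longrightarrow> smooth_fun_on U (f a)"
  shows "smooth_fun_on U (\<lambda>x. \<Sum>a\<in>A. f a x)"
  using assms(2,3) by induction (simp_all add: smooth_fun_on_const smooth_fun_on_add[OF assms(1)])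

lemma smooth_fun_on_prod:
  assumes "open U" "finite A" "\<And>a. a \<in> A \<Longrightarrow> smooth_fun_on U (f a)"
  shows "smooth_fun_on U (\<lambda>x. \<Prod>a\<in>A. f a x)"
  using assms(2,3) by induction (simp_all add: smooth_fun_on_const smooth_fun_on_mult[OF assms(1)])

lemma smooth_fun_on_det:
  assumes "open U" "\<And>i j. smooth_fun_on U (\<lambda>x. M x $ i $ j)"
  shows "smooth_fun_on U (\<lambda>x. det (M x :: real^'n^'n))"
  unfolding det_def
  by (intro smooth_fun_on_sum[OF assms(1) finite_permutations[OF finite_class.finite_UNIV]]
      smooth_fun_on_mult[OF assms(1) smooth_fun_on_const]
      smooth_fun_on_prod[OF assms(1) finite_class.finite_UNIV] assms(2))

section \<open>Symmetry of mixed partial derivatives\<close>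

lemma has_real_derivative_along_line:
  fixes f :: "'a::real_normed_vector \<Rightarrow> real"
  assumes "f differentiable (at (p + s *\<^sub>R w))"
  shows "((\<lambda>t. f (p + t *\<^sub>R w)) has_real_derivative frechet_derivative f (at (p + s *\<^sub>R w)) w) (at s)"
proof -
  let ?f' = "frechet_derivative f (at (p + s *\<^sub>R w))"
  have f': "(f has_derivative ?f') (at (p + s *\<^sub>R w))"
    using assms by (simp add: frechet_derivative_works[symmetric])
  have "((\<lambda>t. p + t *\<^sub>R w) has_derivative (\<lambda>t. t *\<^sub>R w)) (at s)"
    by (auto intro!: derivative_eq_intros)
  from has_derivative_compose[OF this f']
  have "((\<lambda>t. f (p + t *\<^sub>R w)) has_derivative (\<lambda>t. ?f' (t *\<^sub>R w))) (at s)" .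
  moreover have "?f' (t *\<^sub>R w) = ?f' w * t" for t
    using linear_scale[OF has_derivative_linear[OF f']] by simp
  ultimately have "((\<lambda>t. f (p + t *\<^sub>R w)) has_derivative (\<lambda>t. ?f' w * t)) (at s)"
    by simp
  then show ?thesis by (simp add: has_field_derivative_def)
qed

text \<open>Two applications of the mean value theorem, along u and then along v.\<close>
lemma second_difference_mean_value:
  fixes f :: "'a::real_normed_vector \<Rightarrow> real"
  assumes "0 < t"
    and f: "\<And>a b. 0 \<le> a \<Longrightarrow> a \<le> t \<Longrightarrow> 0 \<le> b \<Longrightarrow> b \<le> t \<Longrightarrow>
      f differentiable (at (x + a *\<^sub>R u + b *\<^sub>R v))"
    and fu: "\<And>a b. 0 \<le> a \<Longrightarrow> a \<le> t \<Longrightarrow> 0 \<le> b \<Longrightarrow> b \<le> t \<Longrightarrow>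
      (\<lambda>y. frechet_derivative f (at y) u) differentiable (at (x + a *\<^sub>R u + b *\<^sub>R v))"
  shows "\<exists>a b. 0 < a \<and> a < t \<and> 0 < b \<and> b < t \<and>
    f (x + t *\<^sub>R u + t *\<^sub>R v) - f (x + t *\<^sub>R u) - f (x + t *\<^sub>R v) + f x =
    t\<^sup>2 * frechet_derivative (\<lambda>y. frechet_derivative f (at y) u) (at (x + a *\<^sub>R u + b *\<^sub>R v)) v"
proof -
  define fu where "fu y = frechet_derivative f (at y) u" for y
  define \<phi> where "\<phi> a = f ((x + t *\<^sub>R v) + a *\<^sub>R u) - f (x + a *\<^sub>R u)" for a
  define \<psi> where "\<psi> a b = fu ((x + a *\<^sub>R u) + b *\<^sub>R v)" for a b
  have "DERIV \<phi> a :> fu (x + t *\<^sub>R v + a *\<^sub>R u) - fu (x + a *\<^sub>R u)" if "0 \<le> a" "a \<le> t" for a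
    unfolding \<phi>_def fu_def using f[of a t] f[of a 0] that \<open>0 < t\<close>
    by (intro DERIV_diff has_real_derivative_along_line) (simp_all add: add_ac)
  from MVT2[OF \<open>0 < t\<close> this] obtain a where a: "0 < a" "a < t"
    and "\<phi> t - \<phi> 0 = t * (fu (x + t *\<^sub>R v + a *\<^sub>R u) - fu (x + a *\<^sub>R u))"
    by auto
  then have \<phi>_mvt: "\<phi> t - \<phi> 0 = t * (\<psi> a t - \<psi> a 0)"
    by (simp add: \<psi>_def add_ac)
  have "DERIV (\<psi> a) b :> frechet_derivative fu (at (x + a *\<^sub>R u + b *\<^sub>R v)) v"
    if "0 \<le> b" "b \<le> t" for b
    unfolding \<psi>_def using fu[of a b] that a by (intro has_real_derivative_along_line) (simp add: fu_def)
  from MVT2[OF \<open>0 < t\<close> this] obtain b where b: "0 < b" "b < t"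
    and "\<psi> a t - \<psi> a 0 = t * frechet_derivative fu (at (x + a *\<^sub>R u + b *\<^sub>R v)) v"
    by auto
  with \<phi>_mvt have "f (x + t *\<^sub>R u + t *\<^sub>R v) - f (x + t *\<^sub>R u) - f (x + t *\<^sub>R v) + f x =
      t\<^sup>2 * frechet_derivative fu (at (x + a *\<^sub>R u + b *\<^sub>R v)) v"
    by (simp add: \<phi>_def add_ac power2_eq_square)
  with a b show ?thesis unfolding fu_def by blast
qed

lemma dist_parallelogram_le:
  fixes x u v :: "'a::real_normed_vector"
  assumes "0 \<le> a" "a \<le> t" "0 \<le> b" "b \<le> t"
  shows "dist (x + a *\<^sub>R u + b *\<^sub>R v) x \<le> t * (norm u + norm v)"
proof -
  have "dist (x + a *\<^sub>R u + b *\<^sub>R v) x \<le> norm (a *\<^sub>R u) + norm (b *\<^sub>R v)"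
    using norm_triangle_ineq[of "a *\<^sub>R u" "b *\<^sub>R v"] by (simp add: dist_norm add.assoc)
  also have "\<dots> \<le> t * (norm u + norm v)"
    using assms by (auto simp: distrib_left intro!: add_mono mult_right_mono)
  finally show ?thesis .
qed

lemma mixed_derivatives_meet:
  fixes f :: "'a::real_normed_vector \<Rightarrow> real"
  assumes "0 < t" and ball: "cball x (t * (norm u + norm v)) \<subseteq> U"
    and f: "\<And>y. y \<in> U \<Longrightarrow> f differentiable (at y)"
    and fu: "\<And>y. y \<in> U \<Longrightarrow> (\<lambda>z. frechet_derivative f (at z) u) differentiable (at y)"
    and fv: "\<And>y. y \<in> U \<Longrightarrow> (\<lambda>z. frechet_derivative f (at z) v) differentiable (at y)"
  shows "\<exists>p q. dist p x \<le> t * (norm u + norm v) \<and> dist q x \<le> t * (norm u + norm v) \<and>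
    frechet_derivative (\<lambda>z. frechet_derivative f (at z) u) (at p) v =
    frechet_derivative (\<lambda>z. frechet_derivative f (at z) v) (at q) u"
proof -
  have inU: "x + a *\<^sub>R u + b *\<^sub>R v \<in> U" "x + b *\<^sub>R v + a *\<^sub>R u \<in> U"
    if "0 \<le> a" "a \<le> t" "0 \<le> b" "b \<le> t" for a b
    using dist_parallelogram_le[OF that, of x u v] ball by (auto simp: dist_commute add_ac subset_iff)
  obtain a b where ab: "0 < a" "a < t" "0 < b" "b < t"
    and "f (x + t *\<^sub>R u + t *\<^sub>R v) - f (x + t *\<^sub>R u) - f (x + t *\<^sub>R v) + f x =
      t\<^sup>2 * frechet_derivative (\<lambda>z. frechet_derivative f (at z) u) (at (x + a *\<^sub>R u + b *\<^sub>R v)) v"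
    using second_difference_mean_value[of t f x u v] \<open>0 < t\<close> inU f fu by blast
  moreover obtain a' b' where ab': "0 < a'" "a' < t" "0 < b'" "b' < t"
    and "f (x + t *\<^sub>R v + t *\<^sub>R u) - f (x + t *\<^sub>R v) - f (x + t *\<^sub>R u) + f x =
      t\<^sup>2 * frechet_derivative (\<lambda>z. frechet_derivative f (at z) v) (at (x + a' *\<^sub>R v + b' *\<^sub>R u)) u"
    using second_difference_mean_value[of t f x v u] \<open>0 < t\<close> inU f fv by blast
  ultimately have "frechet_derivative (\<lambda>z. frechet_derivative f (at z) u) (at (x + a *\<^sub>R u + b *\<^sub>R v)) v =
      frechet_derivative (\<lambda>z. frechet_derivative f (at z) v) (at (x + b' *\<^sub>R u + a' *\<^sub>R v)) u"
    using \<open>0 < t\<close> by (simp add: algebra_simps)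
  moreover have "dist (x + a *\<^sub>R u + b *\<^sub>R v) x \<le> t * (norm u + norm v)"
    "dist (x + b' *\<^sub>R u + a' *\<^sub>R v) x \<le> t * (norm u + norm v)"
    using ab ab' by (simp_all add: dist_parallelogram_le)
  ultimately show ?thesis by blast
qed

text \<open>Schwarz's theorem for directional derivatives: the second difference quotients converge
  to both mixed derivatives.\<close>
lemma frechet_derivative_mixed_commute:
  fixes f :: "'a::real_normed_vector \<Rightarrow> real"
  assumes U: "open U" "x \<in> U"
    and f: "\<And>y. y \<in> U \<Longrightarrow> f differentiable (at y)"
    and fu: "\<And>y. y \<in> U \<Longrightarrow> (\<lambda>z. frechet_derivative f (at z) u) differentiable (at y)"
    and fv: "\<And>y. y \<in> U \<Longrightarrow> (\<lambda>z. frechet_derivative f (at z) v) differentiable (at y)"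
    and cont_uv: "isCont (\<lambda>y. frechet_derivative (\<lambda>z. frechet_derivative f (at z) u) (at y) v) x"
    and cont_vu: "isCont (\<lambda>y. frechet_derivative (\<lambda>z. frechet_derivative f (at z) v) (at y) u) x"
  shows "frechet_derivative (\<lambda>z. frechet_derivative f (at z) u) (at x) v =
    frechet_derivative (\<lambda>z. frechet_derivative f (at z) v) (at x) u"
proof -
  define A where "A y = frechet_derivative (\<lambda>z. frechet_derivative f (at z) u) (at y) v" for y
  define B where "B y = frechet_derivative (\<lambda>z. frechet_derivative f (at z) v) (at y) u" for y
  define c where "c = norm u + norm v + 1"
  have "c > 0" "norm u + norm v \<le> c" by (simp_all add: c_def add_nonneg_pos)
  obtain r where r: "r > 0" "cball x r \<subseteq> U" using U open_contains_cball by blast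
  have "\<bar>A x - B x\<bar> \<le> e" if "e > 0" for e
  proof -
    obtain d1 where d1: "d1 > 0" "\<And>y. dist y x < d1 \<Longrightarrow> dist (A y) (A x) < e / 2"
      using cont_uv \<open>e > 0\<close> unfolding A_def[symmetric] continuous_at_eps_delta by (metis half_gt_zero)
    obtain d2 where d2: "d2 > 0" "\<And>y. dist y x < d2 \<Longrightarrow> dist (B y) (B x) < e / 2"
      using cont_vu \<open>e > 0\<close> unfolding B_def[symmetric] continuous_at_eps_delta by (metis half_gt_zero)
    define t where "t = min r (min d1 d2) / (2 * c)"
    have t: "0 < t" "t * c < r" "t * c < d1" "t * c < d2"
      using r d1 d2 \<open>c > 0\<close> by (auto simp: t_def)
    have tc: "t * (norm u + norm v) \<le> t * c"
      using \<open>0 < t\<close> \<open>norm u + norm v \<le> c\<close> by (simp add: mult_left_mono)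
    then have "cball x (t * (norm u + norm v)) \<subseteq> U"
      using t(2) r(2) subset_cball[of "t * (norm u + norm v)" r x] by force
    then obtain p q where "dist p x < d1" "dist q x < d2" "A p = B q"
      using mixed_derivatives_meet[OF t(1) _ f fu fv] t tc unfolding A_def B_def
      by (meson order.strict_trans1)
    with d1(2)[of p] d2(2)[of q] show ?thesis by (auto simp: dist_real_def abs_if split: if_split_asm)
  qed
  then have "A x - B x = 0" by (rule dense_eq0_I)
  then show ?thesis by (simp add: A_def B_def)
qed

lemma pd_commute:
  assumes "open U" "x \<in> U" "smooth_fun_on U f"
  shows "pd (pd f i) j x = pd (pd f j) i x"
proof -
  have pd_eq: "pd h k = (\<lambda>z. frechet_derivative h (at z) (axis k 1))" for h k
    by (simp add: pd_def fun_eq_iff)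
  have "isCont (pd (pd f k) l) x" for k l
    using assms by (metis continuous_on_eq_continuous_at smooth_fun_on_continuous smooth_fun_on_pd)
  with assms show ?thesis
    unfolding pd_eq
    by (intro frechet_derivative_mixed_commute[of U])
      (auto simp: pd_eq[symmetric] intro: smooth_fun_on_differentiable smooth_fun_on_pd)
qed

section \<open>Tensor calculus on a chart\<close>

lemma covariantly_constant_on_imp_semi_symmetric_on:
  assumes "open U" "covariantly_constant_on U g r A"
  shows "semi_symmetric_on U g r A"
proof -
  have "cov g (cov g A) x (mu # nu # idx) = 0" if x: "x \<in> U" and "length idx = r" for x mu nu idx
  proof -
    have "pd (\<lambda>y. cov g A y (nu # idx)) mu x = 0"
      using assms \<open>length idx = r\<close>
      by (intro pd_eq_0_open[OF assms(1) x]) (simp add: covariantly_constant_on_def)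
    moreover have "cov g A x ((nu # idx)[a := p]) = 0" for a p
    proof -
      have "length ((nu # idx)[a := p]) = Suc r"
        by (simp only: length_list_update length_Cons \<open>length idx = r\<close>)
      with assms x show ?thesis by (simp add: covariantly_constant_on_def)
    qed
    ultimately show ?thesis by (simp add: cov_def)
  qed
  then show ?thesis unfolding semi_symmetric_on_def by simp
qed

lemma cov_Cons3:
  "cov g A x [m, a, b, c] = pd (\<lambda>y. A y [a, b, c]) m x - (\<Sum>p\<in>UNIV. Chr g x p m a * A x [p, b, c])
    - (\<Sum>p\<in>UNIV. Chr g x p m b * A x [a, p, c]) - (\<Sum>p\<in>UNIV. Chr g x p m c * A x [a, b, p])"
  by (simp add: cov_def eval_nat_numeral algebra_simps)

lemma sum_swap3: "(\<Sum>a\<in>A. \<Sum>b\<in>B. \<Sum>c\<in>C. f a b c) = (\<Sum>c\<in>C. \<Sum>b\<in>B. \<Sum>a\<in>A. f a b c)"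
proof -
  have "(\<Sum>a\<in>A. \<Sum>b\<in>B. \<Sum>c\<in>C. f a b c) = (\<Sum>a\<in>A. \<Sum>c\<in>C. \<Sum>b\<in>B. f a b c)"
    by (rule sum.cong[OF refl], rule sum.swap)
  also have "\<dots> = (\<Sum>c\<in>C. \<Sum>a\<in>A. \<Sum>b\<in>B. f a b c)"
    by (rule sum.swap)
  also have "\<dots> = (\<Sum>c\<in>C. \<Sum>b\<in>B. \<Sum>a\<in>A. f a b c)"
    by (rule sum.cong[OF refl], rule sum.swap)
  finally show ?thesis .
qed

lemma sum_contraction_reindex:
  fixes I C R :: "'i::finite \<Rightarrow> 'i \<Rightarrow> 'a::comm_semiring_1"
  shows "(\<Sum>j\<in>UNIV. \<Sum>k\<in>UNIV. I j k * (\<Sum>p\<in>UNIV. C p j * R p k)) =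
      (\<Sum>j\<in>UNIV. \<Sum>k\<in>UNIV. (\<Sum>d\<in>UNIV. C j d * I d k) * R j k)"
    and "(\<Sum>j\<in>UNIV. \<Sum>k\<in>UNIV. I j k * (\<Sum>p\<in>UNIV. C p k * R j p)) =
      (\<Sum>j\<in>UNIV. \<Sum>k\<in>UNIV. (\<Sum>c\<in>UNIV. I j c * C k c) * R j k)"
proof -
  have "(\<Sum>j\<in>UNIV. \<Sum>k\<in>UNIV. I j k * (\<Sum>p\<in>UNIV. C p j * R p k)) =
      (\<Sum>j\<in>UNIV. \<Sum>k\<in>UNIV. \<Sum>p\<in>UNIV. C p j * I j k * R p k)"
    by (simp add: sum_distrib_left mult_ac)
  also have "\<dots> = (\<Sum>p\<in>UNIV. \<Sum>k\<in>UNIV. \<Sum>j\<in>UNIV. C p j * I j k * R p k)"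
    by (rule sum_swap3)
  finally show "(\<Sum>j\<in>UNIV. \<Sum>k\<in>UNIV. I j k * (\<Sum>p\<in>UNIV. C p j * R p k)) =
      (\<Sum>j\<in>UNIV. \<Sum>k\<in>UNIV. (\<Sum>d\<in>UNIV. C j d * I d k) * R j k)"
    by (simp add: sum_distrib_right)
  have "(\<Sum>j\<in>UNIV. \<Sum>k\<in>UNIV. I j k * (\<Sum>p\<in>UNIV. C p k * R j p)) =
      (\<Sum>j\<in>UNIV. \<Sum>p\<in>UNIV. \<Sum>k\<in>UNIV. I j k * C p k * R j p)"
    by (simp add: sum_distrib_left mult_ac) (rule sum.cong[OF refl], rule sum.swap)
  then show "(\<Sum>j\<in>UNIV. \<Sum>k\<in>UNIV. I j k * (\<Sum>p\<in>UNIV. C p k * R j p)) =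
      (\<Sum>j\<in>UNIV. \<Sum>k\<in>UNIV. (\<Sum>c\<in>UNIV. I j c * C k c) * R j k)"
    by (simp add: sum_distrib_right)
qed

lemma mult_if_1_0 [simp]:
  fixes a :: real
  shows "a * (if P then 1 else 0) = (if P then a else 0)" "(if P then 1 else 0) * a = (if P then a else 0)"
  by simp_all

locale semi_riemannian_chart =
  fixes U :: "point set" and g :: metric
  assumes open_U: "open U"
    and metric_smooth: "\<And>i j. smooth_fun_on U (\<lambda>x. g x i j)"
    and metric_sym: "\<And>x i j. x \<in> U \<Longrightarrow> g x i j = g x j i"
    and metric_nondegenerate: "\<And>x. x \<in> U \<Longrightarrow> det (gmat g x) \<noteq> 0"

lemma det_lorentz_diag: "det lorentz_diag \<noteq> 0"
proof -
  have "det lorentz_diag = (\<Prod>i\<in>UNIV. lorentz_diag $ i $ i)"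
    by (rule det_diagonal) (simp add: lorentz_diag_def)
  then show ?thesis by (simp add: lorentz_diag_def)
qed

lemma lorentzian_metric_on_semi_riemannian_chart:
  assumes "lorentzian_metric_on U g"
  shows "semi_riemannian_chart U g"
proof
  fix x assume "x \<in> U"
  then obtain P :: "real^4^4" where "transpose P ** gmat g x ** P = lorentz_diag"
    using assms unfolding lorentzian_metric_on_def by blast
  then have "det P * det (gmat g x) * det P \<noteq> 0"
    using det_lorentz_diag by (metis det_mul det_transpose)
  then show "det (gmat g x) \<noteq> 0" by auto
qed (use assms in \<open>simp_all add: lorentzian_metric_on_def\<close>)

context semi_riemannian_chart
begin

lemma matrix_inv_gmat:
  assumes "x \<in> U"
  shows "gmat g x ** matrix_inv (gmat g x) = mat 1" "matrix_inv (gmat g x) ** gmat g x = mat 1"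
proof -
  have "\<exists>A'. gmat g x ** A' = mat 1 \<and> A' ** gmat g x = mat 1"
    using metric_nondegenerate[OF assms] by (simp add: invertible_det_nz[symmetric] invertible_def)
  then show "gmat g x ** matrix_inv (gmat g x) = mat 1" "matrix_inv (gmat g x) ** gmat g x = mat 1"
    unfolding matrix_inv_def by (metis (mono_tags, lifting) someI_ex)+
qed

lemma metric_ginv: "x \<in> U \<Longrightarrow> (\<Sum>k\<in>UNIV. g x i k * ginv g x k j) = (if i = j then 1 else 0)"
  using matrix_inv_gmat(1)[of x] unfolding ginv_def
  by (simp add: matrix_matrix_mult_def mat_def gmat_def vec_eq_iff)

lemma ginv_metric: "x \<in> U \<Longrightarrow> (\<Sum>k\<in>UNIV. ginv g x i k * g x k j) = (if i = j then 1 else 0)"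
  using matrix_inv_gmat(2)[of x] unfolding ginv_def
  by (simp add: matrix_matrix_mult_def mat_def gmat_def vec_eq_iff)

lemma ginv_cramer:
  assumes "x \<in> U"
  shows "ginv g x i j = det (\<chi> r c. if c = i then axis j 1 $ r else gmat g x $ r $ c) / det (gmat g x)"
proof -
  have "gmat g x *v column j (matrix_inv (gmat g x)) = axis j 1"
    using matrix_inv_gmat(1)[OF assms]
    by (simp add: column_def matrix_vector_mult_def matrix_matrix_mult_def vec_eq_iff mat_def axis_def)
  with cramer[OF metric_nondegenerate[OF assms]] show ?thesis
    by (simp add: ginv_def column_def vec_eq_iff)
qed

lemma ginv_smooth: "smooth_fun_on U (\<lambda>x. ginv g x i j)"
proof (rule smooth_fun_on_cong[OF open_U])
  have "smooth_fun_on U (\<lambda>x. (\<chi> r c. if c = i then axis j 1 $ r else gmat g x $ r $ c) $ r $ c)" for r c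
    by (cases "c = i") (simp_all add: gmat_def metric_smooth smooth_fun_on_const)
  then show "smooth_fun_on U
      (\<lambda>x. det (\<chi> r c. if c = i then axis j 1 $ r else gmat g x $ r $ c) * (1 / det (gmat g x)))"
    using metric_nondegenerate
    by (intro smooth_fun_on_mult smooth_fun_on_inverse smooth_fun_on_det open_U)
      (simp_all add: gmat_def metric_smooth)
qed (simp add: ginv_cramer)

lemmas smooth_intros =
  smooth_fun_on_add[OF open_U] smooth_fun_on_diff[OF open_U] smooth_fun_on_mult[OF open_U]
  smooth_fun_on_sum[OF open_U finite_class.finite_UNIV] smooth_fun_on_const smooth_fun_on_pd
  metric_smooth ginv_smooth

lemma Chr_smooth: "smooth_fun_on U (\<lambda>x. Chr g x k i j)"
  unfolding Chr_def by (intro smooth_intros)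

lemma Riem_smooth: "smooth_fun_on U (\<lambda>x. Riem g x i j k l)"
  unfolding Riem_def by (intro smooth_intros Chr_smooth)

lemma Ric_smooth: "smooth_fun_on U (\<lambda>x. Ric g x j k)"
  unfolding Ric_def by (intro smooth_intros Riem_smooth)

lemma Scal_smooth: "smooth_fun_on U (Scal g)"
  unfolding Scal_def[abs_def] by (intro smooth_intros Ric_smooth)

lemma metric_differentiable: "x \<in> U \<Longrightarrow> (\<lambda>y. g y i j) differentiable (at x)"
  by (rule smooth_fun_on_differentiable[OF metric_smooth])

lemma ginv_differentiable: "x \<in> U \<Longrightarrow> (\<lambda>y. ginv g y i j) differentiable (at x)"
  by (rule smooth_fun_on_differentiable[OF ginv_smooth])

lemma Ric_differentiable: "x \<in> U \<Longrightarrow> (\<lambda>y. Ric g y i j) differentiable (at x)"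
  by (rule smooth_fun_on_differentiable[OF Ric_smooth])

lemma Riem_differentiable: "x \<in> U \<Longrightarrow> (\<lambda>y. Riem g y i j k l) differentiable (at x)"
  by (rule smooth_fun_on_differentiable[OF Riem_smooth])

lemma Scal_differentiable: "x \<in> U \<Longrightarrow> Scal g differentiable (at x)"
  by (rule smooth_fun_on_differentiable[OF Scal_smooth])

lemmas curvature_differentiable =
  metric_differentiable Riem_differentiable Ric_differentiable Scal_differentiable

lemma pd_metric_sym: "x \<in> U \<Longrightarrow> pd (\<lambda>y. g y j i) m x = pd (\<lambda>y. g y i j) m x"
  using pd_cong_open(1)[OF open_U, of x "\<lambda>y. g y j i" "\<lambda>y. g y i j" m]
  by (simp add: metric_sym metric_differentiable)

lemma Chr_sym: "x \<in> U \<Longrightarrow> Chr g x k i j = Chr g x k j i"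
  unfolding Chr_def by (simp add: pd_metric_sym algebra_simps)

lemma Chr_lower:
  assumes x: "x \<in> U"
  shows "(\<Sum>p\<in>UNIV. Chr g x p m i * g x p j) =
    (pd (\<lambda>y. g y i j) m x + pd (\<lambda>y. g y m j) i x - pd (\<lambda>y. g y m i) j x) / 2"
proof -
  define A where "A l = pd (\<lambda>y. g y i l) m x + pd (\<lambda>y. g y m l) i x - pd (\<lambda>y. g y m i) l x" for l
  have "(\<Sum>p\<in>UNIV. Chr g x p m i * g x p j) = (\<Sum>p\<in>UNIV. \<Sum>l\<in>UNIV. A l * (g x j p * ginv g x p l) / 2)"
    unfolding Chr_def A_def metric_sym[OF x, of _ j] by (simp add: sum_distrib_left sum_distrib_right mult_ac)
  also have "\<dots> = (\<Sum>l\<in>UNIV. A l * (\<Sum>p\<in>UNIV. g x j p * ginv g x p l)) / 2"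
    by (subst sum.swap) (simp add: sum_distrib_left sum_divide_distrib)
  also have "\<dots> = A j / 2"
    by (simp add: metric_ginv[OF x])
  finally show ?thesis by (simp add: A_def)
qed

lemma pd_metric_Chr:
  assumes x: "x \<in> U"
  shows "pd (\<lambda>y. g y i j) m x =
    (\<Sum>p\<in>UNIV. Chr g x p m i * g x p j) + (\<Sum>p\<in>UNIV. Chr g x p m j * g x i p)"
  using Chr_lower[OF x, of m i j] Chr_lower[OF x, of m j i] metric_sym[OF x, of i]
    pd_metric_sym[OF x, of j i m] pd_metric_sym[OF x, of i m j] pd_metric_sym[OF x, of j m i]
  by (simp add: field_simps)

lemma sum_metric_ginv_cancel:
  "x \<in> U \<Longrightarrow> (\<Sum>d\<in>UNIV. (\<Sum>p\<in>UNIV. F p * g x p d) * ginv g x d b) = F b"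
proof -
  assume x: "x \<in> U"
  have "(\<Sum>d\<in>UNIV. (\<Sum>p\<in>UNIV. F p * g x p d) * ginv g x d b) =
      (\<Sum>p\<in>UNIV. F p * (\<Sum>d\<in>UNIV. g x p d * ginv g x d b))"
    by (simp add: sum_distrib_left sum_distrib_right mult.assoc) (rule sum.swap)
  then show ?thesis by (simp add: metric_ginv[OF x])
qed

lemma sum_ginv_metric_cancel:
  "x \<in> U \<Longrightarrow> (\<Sum>c\<in>UNIV. ginv g x a c * (\<Sum>p\<in>UNIV. F p * g x c p)) = F a"
proof -
  assume x: "x \<in> U"
  have "(\<Sum>c\<in>UNIV. ginv g x a c * (\<Sum>p\<in>UNIV. F p * g x c p)) =
      (\<Sum>p\<in>UNIV. F p * (\<Sum>c\<in>UNIV. ginv g x a c * g x c p))"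
    by (simp add: sum_distrib_left mult_ac) (rule sum.swap)
  then show ?thesis by (simp add: ginv_metric[OF x])
qed

lemma pd_ginv:
  assumes x: "x \<in> U"
  shows "pd (\<lambda>y. ginv g y a b) m x =
    - (\<Sum>d\<in>UNIV. (\<Sum>c\<in>UNIV. ginv g x a c * pd (\<lambda>y. g y c d) m x) * ginv g x d b)"
proof -
  let ?dg = "\<lambda>c d. pd (\<lambda>y. g y c d) m x"
  let ?dginv = "\<lambda>a c. pd (\<lambda>y. ginv g y a c) m x"
  have diff: "(\<lambda>y. ginv g y a c * g y c d) differentiable (at x)" for a c d
    by (intro smooth_fun_on_differentiable[OF _ x] smooth_intros)
  have "(\<Sum>c\<in>UNIV. ?dginv a c * g x c d) = - (\<Sum>c\<in>UNIV. ginv g x a c * ?dg c d)" for d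
  proof -
    have "pd (\<lambda>y. \<Sum>c\<in>UNIV. ginv g y a c * g y c d) m x = pd (\<lambda>y. if a = d then 1 else 0) m x"
      using diff x by (intro pd_cong_open(1)[OF open_U x]) (auto simp: ginv_metric intro: smooth_fun_on_differentiable smooth_intros)
    moreover have "pd (\<lambda>y. \<Sum>c\<in>UNIV. ginv g y a c * g y c d) m x =
        (\<Sum>c\<in>UNIV. ginv g x a c * ?dg c d + ?dginv a c * g x c d)"
      using x by (simp add: pd_sum diff pd_mult ginv_differentiable metric_differentiable)
    ultimately show ?thesis by (simp add: pd_const sum.distrib eq_neg_iff_add_eq_0 add.commute)
  qed
  then have "(\<Sum>d\<in>UNIV. (\<Sum>c\<in>UNIV. ?dginv a c * g x c d) * ginv g x d b) =
      - (\<Sum>d\<in>UNIV. (\<Sum>c\<in>UNIV. ginv g x a c * ?dg c d) * ginv g x d b)"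
    by (simp add: sum_negf)
  then show ?thesis by (simp add: sum_metric_ginv_cancel[OF x])
qed

lemma pd_ginv_Chr:
  assumes x: "x \<in> U"
  shows "pd (\<lambda>y. ginv g y a b) m x =
    - (\<Sum>c\<in>UNIV. ginv g x a c * Chr g x b m c) - (\<Sum>d\<in>UNIV. Chr g x a m d * ginv g x d b)"
proof -
  define C where "C p c = Chr g x p m c" for p c
  have "(\<Sum>c\<in>UNIV. ginv g x a c * (\<Sum>p\<in>UNIV. C p c * g x p d)) =
      (\<Sum>p\<in>UNIV. (\<Sum>c\<in>UNIV. ginv g x a c * C p c) * g x p d)" for d
    by (simp add: sum_distrib_left sum_distrib_right mult.assoc) (rule sum.swap)
  then have "(\<Sum>d\<in>UNIV. (\<Sum>c\<in>UNIV. ginv g x a c * (\<Sum>p\<in>UNIV. C p c * g x p d)) * ginv g x d b) =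
      (\<Sum>c\<in>UNIV. ginv g x a c * C b c)"
    by (simp add: sum_metric_ginv_cancel[OF x])
  moreover have "(\<Sum>d\<in>UNIV. (\<Sum>c\<in>UNIV. ginv g x a c * (\<Sum>p\<in>UNIV. C p d * g x c p)) * ginv g x d b) =
      (\<Sum>d\<in>UNIV. C a d * ginv g x d b)"
    by (simp add: sum_ginv_metric_cancel[OF x])
  ultimately show ?thesis
    unfolding pd_ginv[OF x] pd_metric_Chr[OF x]
    by (simp add: distrib_left distrib_right sum.distrib C_def Chr_sym[OF x])
qed

definition cov2 :: "(point \<Rightarrow> 4 \<Rightarrow> 4 \<Rightarrow> real) \<Rightarrow> point \<Rightarrow> 4 \<Rightarrow> 4 \<Rightarrow> 4 \<Rightarrow> real" where
  "cov2 B x m i j = pd (\<lambda>y. B y i j) m x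
    - (\<Sum>p\<in>UNIV. Chr g x p m i * B x p j) - (\<Sum>p\<in>UNIV. Chr g x p m j * B x i p)"

definition cov4 :: "(point \<Rightarrow> 4 \<Rightarrow> 4 \<Rightarrow> 4 \<Rightarrow> 4 \<Rightarrow> real) \<Rightarrow> point \<Rightarrow> 4 \<Rightarrow> 4 \<Rightarrow> 4 \<Rightarrow> 4 \<Rightarrow> 4 \<Rightarrow> real" where
  "cov4 A x m i j k l = pd (\<lambda>y. A y i j k l) m x
    - (\<Sum>p\<in>UNIV. Chr g x p m i * A x p j k l) - (\<Sum>p\<in>UNIV. Chr g x p m j * A x i p k l)
    - (\<Sum>p\<in>UNIV. Chr g x p m k * A x i j p l) - (\<Sum>p\<in>UNIV. Chr g x p m l * A x i j k p)"

lemma cov_as2: "cov g (as2 B) x [m, i, j] = cov2 B x m i j"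
  by (simp add: cov_def as2_def cov2_def numeral_2_eq_2)

lemma cov_as4: "cov g (as4 A) x [m, i, j, k, l] = cov4 A x m i j k l"
  by (simp add: cov_def as4_def cov4_def eval_nat_numeral algebra_simps)

lemma covariantly_constant_on_as4_iff:
  "covariantly_constant_on U g 4 (as4 A) \<longleftrightarrow> (\<forall>x\<in>U. \<forall>m i j k l. cov4 A x m i j k l = 0)"
proof -
  have "(\<exists>m i j k l. idx = [m, i, j, k, l]) \<longleftrightarrow> length idx = Suc 4" for idx :: "4 list"
    by (auto simp: length_Suc_conv numeral_eq_Suc)
  then show ?thesis
    unfolding covariantly_constant_on_def by (metis cov_as4)
qed

lemma cov2_metric: "x \<in> U \<Longrightarrow> cov2 g x m i j = 0"
  by (simp add: cov2_def pd_metric_Chr)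

lemma cov2_add:
  "(\<And>i j. (\<lambda>y. A y i j) differentiable (at x)) \<Longrightarrow> (\<And>i j. (\<lambda>y. B y i j) differentiable (at x)) \<Longrightarrow>
    cov2 (\<lambda>y i j. A y i j + B y i j) x m i j = cov2 A x m i j + cov2 B x m i j"
  by (simp add: cov2_def pd_add sum.distrib algebra_simps)

lemma cov2_diff:
  "(\<And>i j. (\<lambda>y. A y i j) differentiable (at x)) \<Longrightarrow> (\<And>i j. (\<lambda>y. B y i j) differentiable (at x)) \<Longrightarrow>
    cov2 (\<lambda>y i j. A y i j - B y i j) x m i j = cov2 A x m i j - cov2 B x m i j"
  by (simp add: cov2_def pd_diff sum_subtractf algebra_simps)

lemma cov2_cmult:
  "(\<And>i j. (\<lambda>y. A y i j) differentiable (at x)) \<Longrightarrow>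
    cov2 (\<lambda>y i j. c * A y i j) x m i j = c * cov2 A x m i j"
  by (simp add: cov2_def pd_cmult sum_distrib_left algebra_simps)

lemma cov2_divide:
  "(\<And>i j. (\<lambda>y. A y i j) differentiable (at x)) \<Longrightarrow>
    cov2 (\<lambda>y i j. A y i j / c) x m i j = cov2 A x m i j / c"
  using cov2_cmult[of A x "1 / c" m i j] by simp

lemma cov2_cong_open:
  assumes x: "x \<in> U" and eq: "\<And>y i j. y \<in> U \<Longrightarrow> B y i j = B' y i j"
    and B': "\<And>i j. (\<lambda>y. B' y i j) differentiable (at x)"
  shows "cov2 B x m i j = cov2 B' x m i j"
  using pd_cong_open(1)[OF open_U x, of "\<lambda>y. B' y i j" "\<lambda>y. B y i j" m] eq B' eq[OF x]
  unfolding cov2_def by simp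

lemma cov4_add:
  "(\<And>i j k l. (\<lambda>y. A y i j k l) differentiable (at x)) \<Longrightarrow>
   (\<And>i j k l. (\<lambda>y. B y i j k l) differentiable (at x)) \<Longrightarrow>
    cov4 (\<lambda>y i j k l. A y i j k l + B y i j k l) x m i j k l = cov4 A x m i j k l + cov4 B x m i j k l"
  by (simp add: cov4_def pd_add sum.distrib algebra_simps)

lemma cov4_diff:
  "(\<And>i j k l. (\<lambda>y. A y i j k l) differentiable (at x)) \<Longrightarrow>
   (\<And>i j k l. (\<lambda>y. B y i j k l) differentiable (at x)) \<Longrightarrow>
    cov4 (\<lambda>y i j k l. A y i j k l - B y i j k l) x m i j k l = cov4 A x m i j k l - cov4 B x m i j k l"
  by (simp add: cov4_def pd_diff sum_subtractf algebra_simps)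

lemma cov4_cmult:
  "(\<And>i j k l. (\<lambda>y. A y i j k l) differentiable (at x)) \<Longrightarrow>
    cov4 (\<lambda>y i j k l. c * A y i j k l) x m i j k l = c * cov4 A x m i j k l"
  by (simp add: cov4_def pd_cmult sum_distrib_left algebra_simps)

lemma cov4_divide:
  "(\<And>i j k l. (\<lambda>y. A y i j k l) differentiable (at x)) \<Longrightarrow>
    cov4 (\<lambda>y i j k l. A y i j k l / c) x m i j k l = cov4 A x m i j k l / c"
  using cov4_cmult[of A x "1 / c" m i j k l] by simp

lemma cov2_scalar_times_metric:
  assumes x: "x \<in> U" and s: "s differentiable (at x)"
  shows "cov2 (\<lambda>y i j. s y * g y i j) x m i j = pd s m x * g x i j"
  using pd_mult[OF s metric_differentiable[OF x]]
  unfolding cov2_def pd_metric_Chr[OF x] by (simp add: sum_distrib_left algebra_simps)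

lemma cov4_metric_times:
  assumes x: "x \<in> U" and F: "\<And>i j. (\<lambda>y. F y i j) differentiable (at x)"
  shows "cov4 (\<lambda>y i j k l. g y j k * F y i l) x m i j k l = g x j k * cov2 F x m i l"
    and "cov4 (\<lambda>y i j k l. g y j l * F y i k) x m i j k l = g x j l * cov2 F x m i k"
    and "cov4 (\<lambda>y i j k l. g y i l * F y j k) x m i j k l = g x i l * cov2 F x m j k"
    and "cov4 (\<lambda>y i j k l. g y i k * F y j l) x m i j k l = g x i k * cov2 F x m j l"
  using pd_mult[OF metric_differentiable[OF x] F]
  unfolding cov4_def cov2_def pd_metric_Chr[OF x]
  by (simp_all add: sum_distrib_left sum_distrib_right algebra_simps)

lemma Riem_antisym: "Riem g x j i k l = - Riem g x i j k l"
  unfolding Riem_def by (simp add: sum_negf[symmetric] sum_subtractf algebra_simps)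

lemma cov4_Riem_antisym:
  assumes x: "x \<in> U"
  shows "cov4 (Riem g) x m j i k l = - cov4 (Riem g) x m i j k l"
proof -
  have "pd (\<lambda>y. Riem g y j i k l) m x = - pd (\<lambda>y. Riem g y i j k l) m x"
    unfolding Riem_antisym[of _ j i k l]
    by (rule pd_minus[OF smooth_fun_on_differentiable[OF Riem_smooth x]])
  then show ?thesis
    unfolding cov4_def Riem_antisym[of x j] Riem_antisym[of x _ i] Riem_antisym[of x j i]
    by (simp add: sum_negf algebra_simps)
qed

lemma pd_Scal:
  assumes x: "x \<in> U"
  shows "pd (Scal g) m x = (\<Sum>j\<in>UNIV. \<Sum>k\<in>UNIV. ginv g x j k * cov2 (Ric g) x m j k)"
proof -
  define C where "C p c = Chr g x p m c" for p c
  define I where "I = ginv g x"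
  define R where "R = Ric g x"
  define P where "P j k = (\<Sum>c\<in>UNIV. I j c * C k c)" for j k
  define Q where "Q j k = (\<Sum>d\<in>UNIV. C j d * I d k)" for j k
  have "pd (Scal g) m x = (\<Sum>j\<in>UNIV. \<Sum>k\<in>UNIV. pd (\<lambda>y. ginv g y j k * Ric g y j k) m x)"
    unfolding Scal_def[abs_def]
    by (simp add: pd_sum smooth_fun_on_differentiable[OF _ x] smooth_intros Ric_smooth)
  also have "\<dots> = (\<Sum>j\<in>UNIV. \<Sum>k\<in>UNIV. I j k * cov2 (Ric g) x m j k
      + I j k * (\<Sum>p\<in>UNIV. C p j * R p k) + I j k * (\<Sum>p\<in>UNIV. C p k * R j p)
      - Q j k * R j k - P j k * R j k)"
    using x by (simp add: pd_mult ginv_differentiable Ric_differentiable pd_ginv_Chr cov2_def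
        C_def I_def R_def P_def Q_def algebra_simps)
  also have "\<dots> = (\<Sum>j\<in>UNIV. \<Sum>k\<in>UNIV. I j k * cov2 (Ric g) x m j k)"
    using sum_contraction_reindex[of I C R] by (simp add: sum.distrib sum_subtractf P_def Q_def)
  finally show ?thesis by (simp add: I_def)
qed

text \<open>Contracting the identity with the inverse metric over (j, k) leaves 4 E_il - g_il tr E = 0.\<close>
lemma eq_trace_times_metric:
  assumes x: "x \<in> U"
    and E: "\<And>i j k l. g x j k * E i l - g x j l * E i k + (g x i k * E j l - g x i l * E j k) = 0"
  shows "E i l = g x i l * (\<Sum>j\<in>UNIV. \<Sum>k\<in>UNIV. ginv g x j k * E j k) / 4"
proof -
  let ?contract = "\<lambda>F. \<Sum>j\<in>UNIV. \<Sum>k\<in>UNIV. ginv g x j k * F j k"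
  have ginv_metric': "(\<Sum>k\<in>UNIV. ginv g x j k * g x i k) = (if j = i then 1 else 0)" for i j
    using ginv_metric[OF x, of j i] by (simp add: metric_sym[OF x, of i])
  have metric_ginv': "(\<Sum>j\<in>UNIV. g x j l * ginv g x j k) = (if l = k then 1 else 0)" for k l
    using metric_ginv[OF x, of l k] by (simp add: metric_sym[OF x, of _ l])
  have "?contract (\<lambda>j k. g x j k * E i l) = (\<Sum>j\<in>UNIV. E i l * (\<Sum>k\<in>UNIV. ginv g x j k * g x j k))"
    by (simp add: sum_distrib_left mult_ac)
  then have "?contract (\<lambda>j k. g x j k * E i l) = 4 * E i l"
    by (simp add: ginv_metric')
  moreover have "?contract (\<lambda>j k. g x j l * E i k) = E i l"
    by (subst sum.swap) (simp add: sum_distrib_left[symmetric] mult_ac metric_ginv')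
  moreover have "?contract (\<lambda>j k. g x i k * E j l) = (\<Sum>j\<in>UNIV. E j l * (\<Sum>k\<in>UNIV. ginv g x j k * g x i k))"
    by (simp add: sum_distrib_left mult_ac)
  then have "?contract (\<lambda>j k. g x i k * E j l) = E i l"
    by (simp add: ginv_metric')
  moreover have "?contract (\<lambda>j k. g x i l * E j k) = g x i l * ?contract E"
    by (simp add: sum_distrib_left mult_ac)
  moreover have "?contract (\<lambda>j k. g x j k * E i l) - ?contract (\<lambda>j k. g x j l * E i k)
      + (?contract (\<lambda>j k. g x i k * E j l) - ?contract (\<lambda>j k. g x i l * E j k)) =
      ?contract (\<lambda>j k. g x j k * E i l - g x j l * E i k + (g x i k * E j l - g x i l * E j k))"
    by (simp add: algebra_simps sum.distrib sum_subtractf)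
  moreover have "?contract (\<lambda>j k. g x j k * E i l - g x j l * E i k + (g x i k * E j l - g x i l * E j k)) = 0"
    by (simp add: E)
  ultimately show ?thesis by simp
qed

section \<open>Consequences of a parallel W*-curvature tensor\<close>

lemma cov4_Wstar:
  assumes x: "x \<in> U"
  shows "cov4 (Wstar g) x m i j k l = cov4 (Riem g) x m i j k l
    - (1/3) * (g x j k * cov2 (Ric g) x m i l - g x j l * cov2 (Ric g) x m i k)"
proof -
  have Wstar_eq: "Wstar g =
      (\<lambda>y i j k l. Riem g y i j k l - (1/3) * (g y j k * Ric g y i l - g y j l * Ric g y i k))"
    by (simp add: fun_eq_iff Wstar_def)
  show ?thesis
    unfolding Wstar_eq using x
    by (simp add: cov4_diff cov4_cmult cov4_divide cov4_metric_times curvature_differentiable)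
qed

context
  fixes x assumes x: "x \<in> U"
    and Wstar_parallel: "\<And>m i j k l. cov4 (Wstar g) x m i j k l = 0"
begin

lemma cov2_Ric_eq:
  "cov2 (Ric g) x m i l = g x i l * pd (Scal g) m x / 4"
proof -
  let ?E = "cov2 (Ric g) x m"
  have R: "cov4 (Riem g) x m i j k l = (1/3) * (g x j k * ?E i l - g x j l * ?E i k)" for i j k l
    using cov4_Wstar[OF x, of m i j k l] Wstar_parallel[of m i j k l] by simp
  have "g x j k * ?E i l - g x j l * ?E i k + (g x i k * ?E j l - g x i l * ?E j k) = 0" for i j k l
    using cov4_Riem_antisym[OF x, of m i j k l] R[of i j k l] R[of j i k l] by simp
  from eq_trace_times_metric[OF x this] show ?thesis
    by (simp add: pd_Scal[OF x])
qed

lemma cov4_Riem_eq: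
  "cov4 (Riem g) x m i j k l = (g x j k * g x i l - g x j l * g x i k) * pd (Scal g) m x / 12"
  using cov4_Wstar[OF x, of m i j k l] Wstar_parallel[of m i j k l] cov2_Ric_eq[of m i l] cov2_Ric_eq[of m i k]
  by (simp add: algebra_simps)

lemma cov4_Weyl_eq_0: "cov4 (Weyl g) x m i j k l = 0"
proof -
  have Weyl_eq: "Weyl g = (\<lambda>y i j k l. Riem g y i j k l
     - (g y j k * Ric g y i l - g y j l * Ric g y i k + g y i l * Ric g y j k - g y i k * Ric g y j l) / 2
     + (g y j k * (Scal g y * g y i l) - g y j l * (Scal g y * g y i k)) / 6)"
    by (simp add: fun_eq_iff Weyl_def field_simps)
  have "(\<lambda>y. Scal g y * g y i j) differentiable (at x)" for i j
    using x by (simp add: curvature_differentiable)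
  then show ?thesis
    unfolding Weyl_eq using x
    by (simp add: cov4_add cov4_diff cov4_divide cov4_metric_times cov2_scalar_times_metric
        curvature_differentiable)
      (simp add: cov2_Ric_eq cov4_Riem_eq field_simps)
qed

end

text \<open>If \<nabla>B = c g \<otimes> ds, then \<nabla>\<nabla>B = c g \<otimes> \<nabla>ds, and the Hessian \<nabla>ds of a function
  is symmetric because partial derivatives and the lower indices of the Christoffel symbols
  commute.\<close>
lemma semi_symmetric_on_if_cov_eq_metric_times_gradient:
  assumes s: "smooth_fun_on U s"
    and cov_B: "\<And>x n i j. x \<in> U \<Longrightarrow> cov g (as2 B) x [n, i, j] = c * (g x i j * pd s n x)"
  shows "semi_symmetric_on U g 2 (as2 B)"
  unfolding semi_symmetric_on_def
proof (intro ballI allI impI)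
  fix x mu nu and idx :: "4 list" assume x: "x \<in> U" and "length idx = 2"
  then obtain i j where idx: "idx = [i, j]"
    by (auto simp: length_Suc_conv numeral_eq_Suc)
  have hessian: "cov g (cov g (as2 B)) x [mu, nu, i, j] =
      c * g x i j * (pd (pd s nu) mu x - (\<Sum>p\<in>UNIV. Chr g x p mu nu * pd s p x))" for mu nu
  proof -
    have ds: "pd s nu differentiable (at x)"
      by (rule smooth_fun_on_differentiable[OF smooth_fun_on_pd[OF s] x])
    have "smooth_fun_on U (\<lambda>y. c * (g y i j * pd s nu y))"
      by (intro smooth_intros s)
    then have "(\<lambda>y. c * (g y i j * pd s nu y)) differentiable (at x)"
      using x by (rule smooth_fun_on_differentiable)
    then have "pd (\<lambda>y. cov g (as2 B) y [nu, i, j]) mu x = pd (\<lambda>y. c * (g y i j * pd s nu y)) mu x"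
      by (rule pd_cong_open(1)[OF open_U x, symmetric, rotated]) (simp add: cov_B)
    also have "\<dots> = c * (g x i j * pd (pd s nu) mu x + pd (\<lambda>y. g y i j) mu x * pd s nu x)"
      using x ds by (simp add: pd_cmult pd_mult metric_differentiable)
    finally show ?thesis
      unfolding cov_Cons3 cov_B[OF x] pd_metric_Chr[OF x]
      by (simp add: sum_distrib_left sum_distrib_right algebra_simps)
  qed
  show "cov g (cov g (as2 B)) x (mu # nu # idx) = cov g (cov g (as2 B)) x (nu # mu # idx)"
    unfolding idx hessian using pd_commute[OF open_U x s, of nu mu] Chr_sym[OF x] by simp
qed

lemma cov_energy_momentum:
  assumes "k \<noteq> 0"
    and einstein: "\<And>y i j. y \<in> U \<Longrightarrow> Ric g y i j - (1/2) * Scal g y * g y i j + \<Lambda> * g y i j = k * T y i j"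
    and x: "x \<in> U" and Wstar_parallel: "\<And>m a b c d. cov4 (Wstar g) x m a b c d = 0"
  shows "cov g (as2 T) x [n, i, j] = (- 1 / (4 * k)) * (g x i j * pd (Scal g) n x)"
proof -
  define T' where "T' y i j = (Ric g y i j - (Scal g y * g y i j) / 2 + \<Lambda> * g y i j) / k" for y i j
  have "T y i j = T' y i j" if "y \<in> U" for y i j
    using einstein[OF that, of i j] \<open>k \<noteq> 0\<close> by (simp add: T'_def field_simps)
  moreover have "smooth_fun_on U (\<lambda>y. T' y i j)" for i j
    unfolding T'_def divide_inverse by (intro smooth_intros Ric_smooth Scal_smooth)
  then have "(\<lambda>y. T' y i j) differentiable (at x)" for i j
    using x by (rule smooth_fun_on_differentiable)
  moreover have Sg: "(\<lambda>y. Scal g y * g y i j) differentiable (at x)" for i j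
    using x by (simp add: curvature_differentiable)
  ultimately have "cov2 T x n i j = cov2 T' x n i j"
    using x by (intro cov2_cong_open) auto
  also have "\<dots> = - (g x i j * pd (Scal g) n x) / (4 * k)"
    unfolding T'_def[abs_def] using x Sg
    by (simp add: cov2_add cov2_diff cov2_divide cov2_cmult cov2_scalar_times_metric cov2_metric
        curvature_differentiable)
      (simp add: cov2_Ric_eq[OF x Wstar_parallel] field_simps)
  finally show ?thesis by (simp add: cov_as2)
qed

end

theorem mainTheorem5:
  fixes U :: "(real^4) set" and g :: metric and T :: "point \<Rightarrow> 4 \<Rightarrow> 4 \<Rightarrow> real"
    and \<Lambda> k :: real
  assumes spacetime: "lorentzian_metric_on U g"
    and k_nz: "k \<noteq> 0"
    and T_sym: "\<forall>x\<in>U. \<forall>i j. T x i j = T x j i"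
    and einstein: "\<forall>x\<in>U. \<forall>i j.
        Ric g x i j - (1/2) * Scal g x * g x i j + \<Lambda> * g x i j = k * T x i j"
    and Wstar_parallel: "covariantly_constant_on U g 4 (as4 (Wstar g))"
  shows "semi_symmetric_on U g 4 (as4 (Weyl g)) \<and> semi_symmetric_on U g 2 (as2 T)"
proof -
  interpret semi_riemannian_chart U g
    using spacetime by (rule lorentzian_metric_on_semi_riemannian_chart)
  have Wstar_cov_zero: "\<And>x m i j k l. x \<in> U \<Longrightarrow> cov4 (Wstar g) x m i j k l = 0"
    using Wstar_parallel by (simp add: covariantly_constant_on_as4_iff)
  have "covariantly_constant_on U g 4 (as4 (Weyl g))"
    using cov4_Weyl_eq_0[OF _ Wstar_cov_zero] by (simp add: covariantly_constant_on_as4_iff)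
  then have "semi_symmetric_on U g 4 (as4 (Weyl g))"
    by (rule covariantly_constant_on_imp_semi_symmetric_on[OF open_U])
  moreover have "semi_symmetric_on U g 2 (as2 T)"
    using cov_energy_momentum[OF k_nz _ _ Wstar_cov_zero] einstein
    by (intro semi_symmetric_on_if_cov_eq_metric_times_gradient[OF Scal_smooth]) blast
  ultimately show ?thesis ..
qed

end
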